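(* Let $K$ be a field, let $L\in K^{n\times n}[s]$, $L_1\in K^{n_1\times n_1}[s]$ be nonsingular polynomial matrices, let $\Theta,\Theta_1\in K^{n_1\times n}_\infty(s)$ satisfy $\Theta L=L_1\Theta_1$, and let $\phi:U^L\to U^{L_1}$ be the $K_\infty(s)$-module homomorphism given by $\phi(\rho^Lx)=\rho^{L_1}(\Theta x)$, $x\in K^n_\infty(s)$. Then: (i) $\phi$ is surjective if and only if there exist proper rational matrices $C\in K^{n\times n_1}_\infty(s)$, $D\in K^{n_1\times n_1}_\infty(s)$ with $\Theta C+s^{-1}L_1D=I_{n_1}$; (ii) $\phi$ is injective if and only if there exist proper rational matrices $C\in K^{n_1\times n}_\infty(s)$, $D\in K^{n\times n}_\infty(s)$ with $C\Theta_1+D\,s^{-1}L=I_n$ (equivalently, $\Theta_1^TC^T+s^{-1}L^TD^T=I_n$).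
   Context: $K(s)$ denotes the field of rational functions over $K$. A rational function $f$ is proper if $f=0$ or $f=p/q$ with $p,q\in K[s]$, $q\ne0$, $\deg p\le\deg q$; $K_\infty(s)$ is the ring of proper rational functions, and $K^n_\infty(s)$, $K^{m\times r}_\infty(s)$ denote vectors/matrices with proper rational entries. One has $K(s)=K[s]\oplus s^{-1}K_\infty(s)$; $\pi_+:K(s)\to K[s]$ denotes the projection onto the polynomial part along $s^{-1}K_\infty(s)$, extended entrywise to vectors and matrices. For a nonsingular $M\in K^{m\times m}[s]$, define $\rho^M:K^m_\infty(s)\to K^m[s]$ by $\rho^M x=M\,\pi_+(M^{-1}x)$ and $U^M=\operatorname{Im}\rho^M$, a $K_\infty(s)$-module via $q\cdot\rho^Mx=\rho^M(qx)$ (well defined since $\operatorname{Ker}\rho^M=K^m_\infty(s)\cap s^{-1}MK^m_\infty(s)$). *)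

theory Defs
  imports "HOL-Computational_Algebra.Fraction_Field" "HOL-Computational_Algebra.Polynomial"
    "Jordan_Normal_Form.Determinant"
begin

type_synonym 'a ratf = "'a poly fract"

definition proper :: "'a::field ratf \<Rightarrow> bool" where
  "proper f \<longleftrightarrow> f = 0 \<or> (\<exists>p q. q \<noteq> 0 \<and> degree p \<le> degree q \<and> f = Fract p q)"

definition s_ratf :: "'a::field ratf" where
  "s_ratf = to_fract [:0, 1:]"

text \<open>Polynomial part: pi_+ f is the unique polynomial g with f - g in s^{-1} K_infty(s).\<close>
definition pi_plus :: "'a::field ratf \<Rightarrow> 'a ratf" where
  "pi_plus f = to_fract (THE g. \<exists>h. proper h \<and> f = to_fract g + inverse s_ratf * h)"

definition proper_vec :: "'a::field ratf vec \<Rightarrow> bool" where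
  "proper_vec x \<longleftrightarrow> (\<forall>i < dim_vec x. proper (x $ i))"

definition proper_mat :: "'a::field ratf mat \<Rightarrow> bool" where
  "proper_mat A \<longleftrightarrow> (\<forall>i < dim_row A. \<forall>j < dim_col A. proper (A $$ (i, j)))"

definition ratm :: "'a::field poly mat \<Rightarrow> 'a ratf mat" where
  "ratm M = map_mat to_fract M"

text \<open>rho^M x = M pi_+(M^{-1} x), for nonsingular M of size m.\<close>
definition rho :: "'a::field poly mat \<Rightarrow> 'a ratf vec \<Rightarrow> 'a ratf vec" where
  "rho M x = ratm M *\<^sub>v map_vec pi_plus
     (THE y. y \<in> carrier_vec (dim_col M) \<and> ratm M *\<^sub>v y = x)"

definition U_mod :: "'a::field poly mat \<Rightarrow> 'a ratf vec set" where
  "U_mod M = rho M ` {x \<in> carrier_vec (dim_row M). proper_vec x}"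

definition phi_hom :: "'a::field poly mat \<Rightarrow> 'a poly mat \<Rightarrow> 'a ratf mat \<Rightarrow> 'a ratf vec \<Rightarrow> 'a ratf vec" where
  "phi_hom L L1 \<Theta> u = rho L1 (\<Theta> *\<^sub>v
     (SOME x. x \<in> carrier_vec (dim_row L) \<and> proper_vec x \<and> rho L x = u))"

end

theory Submission
  imports Defs
begin

text \<open>
  Two facts drive the proof. First, the kernel of \<open>\<rho>\<^sup>M\<close> consists of the proper vectors in
  \<open>s\<^sup>-\<^sup>1 M K\<^sub>\<infinity>(s)\<^sup>m\<close>, so \<open>\<rho>\<^sup>M x = \<rho>\<^sup>M x'\<close> iff \<open>x - x' = s\<^sup>-\<^sup>1 M z\<close> with \<open>z\<close> proper.
  Hence \<open>\<phi>\<close> is onto iff every unit vector \<open>e\<^sub>j\<close> can be written as \<open>\<Theta> x\<^sub>j + s\<^sup>-\<^sup>1 L\<^sub>1 z\<^sub>j\<close>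
  with \<open>x\<^sub>j, z\<^sub>j\<close> proper, which is (i) column by column; and, since
  \<open>\<Theta> s\<^sup>-\<^sup>1 L = s\<^sup>-\<^sup>1 L\<^sub>1 \<Theta>\<^sub>1\<close>, \<open>\<phi>\<close> is injective iff \<open>v\<close> is proper whenever
  \<open>\<Theta>\<^sub>1 v\<close> and \<open>s\<^sup>-\<^sup>1 L v\<close> are.

  Second, a matrix \<open>A\<close> over \<open>K(s)\<close> with a nonsingular maximal minor has a proper left
  inverse iff \<open>A v\<close> proper forces \<open>v\<close> proper. Choose the nonsingular maximal minor \<open>B\<close>
  of largest degree: by Cramer's rule every entry of \<open>A B\<^sup>-\<^sup>1\<close> is a quotient of two maximal
  minors, the denominator being \<open>det B\<close>, so \<open>A B\<^sup>-\<^sup>1\<close> is proper, hence so is \<open>B\<^sup>-\<^sup>1\<close>, and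
  \<open>B\<^sup>-\<^sup>1\<close> composed with the row selection is the left inverse. Applied to the stacked
  matrix \<open>[\<Theta>\<^sub>1; s\<^sup>-\<^sup>1 L]\<close> this gives (ii).
\<close>

section \<open>Matrix algebra\<close>

lemma smult_mat_mult_vec:
  fixes A :: "'a::comm_ring_1 mat"
  assumes "dim_vec v = dim_col A"
  shows "(k \<cdot>\<^sub>m A) *\<^sub>v v = k \<cdot>\<^sub>v (A *\<^sub>v v)"
  using assms by (intro eq_vecI) simp_all

lemma nonsingular_mat_inverse:
  fixes A :: "'a::field mat"
  assumes "A \<in> carrier_mat n n" "det A \<noteq> 0"
  obtains B where "B \<in> carrier_mat n n" "A * B = 1\<^sub>m n" "B * A = 1\<^sub>m n"
  using det_non_zero_imp_unit[OF assms, of "()"] that unfolding Units_def ring_mat_def by auto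

lemma mult_mat_vec_cancel:
  fixes A :: "'a::field mat"
  assumes "A \<in> carrier_mat n n" "det A \<noteq> 0" "u \<in> carrier_vec n" "v \<in> carrier_vec n"
    and "A *\<^sub>v u = A *\<^sub>v v"
  shows "u = v"
proof -
  obtain B where B: "B \<in> carrier_mat n n" "B * A = 1\<^sub>m n"
    using nonsingular_mat_inverse[OF assms(1,2)] by blast
  have "u = (B * A) *\<^sub>v u" using assms B by simp
  also have "\<dots> = B *\<^sub>v (A *\<^sub>v u)" using assms B by (intro assoc_mult_mat_vec) auto
  also have "\<dots> = (B * A) *\<^sub>v v" using assms B(1) by simp
  also have "\<dots> = v" unfolding B(2) using assms by simp
  finally show ?thesis .
qed

lemma mult_mat_vec_surj:
  fixes A :: "'a::field mat"
  assumes "A \<in> carrier_mat n n" "det A \<noteq> 0" "w \<in> carrier_vec n"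
  obtains v where "v \<in> carrier_vec n" "A *\<^sub>v v = w"
proof -
  obtain B where B: "B \<in> carrier_mat n n" "A * B = 1\<^sub>m n"
    using nonsingular_mat_inverse[OF assms(1,2)] by blast
  have "A *\<^sub>v (B *\<^sub>v w) = w"
    using assms B by (simp flip: assoc_mult_mat_vec[of _ n n _ n])
  then show ?thesis using B assms(3) by (intro that[of "B *\<^sub>v w"]) auto
qed

lemma mult_append_rows_split:
  assumes N: "N \<in> carrier_mat n (m + k)" and A: "A \<in> carrier_mat m l" and B: "B \<in> carrier_mat k l"
  shows "N * (A @\<^sub>r B) = mat n m (\<lambda>(i, j). N $$ (i, j)) * A + mat n k (\<lambda>(i, j). N $$ (i, m + j)) * B"
proof -
  let ?C = "mat n m (\<lambda>(i, j). N $$ (i, j))" and ?D = "mat n k (\<lambda>(i, j). N $$ (i, m + j))"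
  have "N = four_block_mat ?C ?D (0\<^sub>m 0 m) (0\<^sub>m 0 k)"
    using N by (intro eq_matI) auto
  then have "N * (A @\<^sub>r B) = four_block_mat ?C ?D (0\<^sub>m 0 m) (0\<^sub>m 0 k) *
      four_block_mat A (0\<^sub>m m 0) B (0\<^sub>m k 0)"
    using A B unfolding append_rows_def by simp
  also have "\<dots> = four_block_mat (?C * A + ?D * B) (?C * 0\<^sub>m m 0 + ?D * 0\<^sub>m k 0)
      (0\<^sub>m 0 m * A + 0\<^sub>m 0 k * B) (0\<^sub>m 0 m * 0\<^sub>m m 0 + 0\<^sub>m 0 k * 0\<^sub>m k 0)"
    using A B by (intro mult_four_block_mat) auto
  finally show ?thesis
    using A B by (intro eq_matI) auto
qed

lemma mat_of_cols_solves_one_mat: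
  fixes A B :: "'a::comm_ring_1 mat"
  assumes A: "A \<in> carrier_mat m n" and B: "B \<in> carrier_mat m k"
    and X: "\<And>j. j < m \<Longrightarrow> X j \<in> carrier_vec n" and Z: "\<And>j. j < m \<Longrightarrow> Z j \<in> carrier_vec k"
    and XZ: "\<And>j. j < m \<Longrightarrow> A *\<^sub>v X j + B *\<^sub>v Z j = unit_vec m j"
  shows "A * mat_of_cols n (map X [0..<m]) + B * mat_of_cols k (map Z [0..<m]) = 1\<^sub>m m"
proof (rule mat_col_eqI)
  let ?C = "mat_of_cols n (map X [0..<m])" and ?D = "mat_of_cols k (map Z [0..<m])"
  have C: "?C \<in> carrier_mat n m" and D: "?D \<in> carrier_mat k m" by auto
  fix j assume "j < dim_col (1\<^sub>m m :: 'a mat)"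
  then have j: "j < m" by simp
  have "col (A * ?C + B * ?D) j = col (A * ?C) j + col (B * ?D) j"
    using A B C D j by (intro col_add[of _ m m]) auto
  also have "\<dots> = A *\<^sub>v col ?C j + B *\<^sub>v col ?D j"
    using col_mult2[OF A C j] col_mult2[OF B D j] by (simp only:)
  also have "\<dots> = A *\<^sub>v X j + B *\<^sub>v Z j"
    using j X Z by simp
  finally show "col (A * ?C + B * ?D) j = col (1\<^sub>m m) j"
    using XZ j by simp
qed (use A B in auto)

definition select_rows :: "'b mat \<Rightarrow> nat list \<Rightarrow> 'b mat" where
  "select_rows A xs = mat_of_rows (dim_col A) (map (row A) xs)"

lemma select_rows_dim [simp]:
  "dim_row (select_rows A xs) = length xs" "dim_col (select_rows A xs) = dim_col A"
  unfolding select_rows_def by simp_all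

lemma select_rows_index [simp]:
  "i < length xs \<Longrightarrow> j < dim_col A \<Longrightarrow> select_rows A xs $$ (i, j) = A $$ (xs ! i, j)"
  unfolding select_rows_def by (simp add: mat_of_rows_index row_def)

lemma det_select_rows_update:
  fixes A :: "'a::comm_ring_1 mat"
  assumes A: "A \<in> carrier_mat m n" and xs: "length xs = n"
    and Bi: "Bi \<in> carrier_mat n n" "Bi * select_rows A xs = 1\<^sub>m n"
    and k: "k < m" and j: "j < n"
  shows "det (select_rows A (xs[j := k])) = (A * Bi) $$ (k, j) * det (select_rows A xs)"
proof -
  define B where "B = select_rows A xs"
  define r where "r = row A k"
  define y where "y = Bi\<^sup>T *\<^sub>v r"
  have B: "B \<in> carrier_mat n n" using A xs unfolding B_def by auto
  have r: "r \<in> carrier_vec n" using A unfolding r_def row_def by auto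
  have y: "y \<in> carrier_vec n" using Bi r unfolding y_def by auto
  have ABy: "(A * Bi) $$ (k, j) = y $ j"
    using A Bi k j r unfolding y_def r_def by (simp add: comm_scalar_prod[of _ n])
  have Bty: "B\<^sup>T *\<^sub>v y = r"
  proof -
    have "B\<^sup>T *\<^sub>v y = (Bi * B)\<^sup>T *\<^sub>v r"
      using B Bi r unfolding y_def by (simp add: transpose_mult)
    then show ?thesis using Bi r unfolding B_def by simp
  qed
  have "select_rows A (xs[j := k]) \<in> carrier_mat n n"
    using A xs by (intro carrier_matI) auto
  then have "det (select_rows A (xs[j := k])) = det (select_rows A (xs[j := k]))\<^sup>T"
    by (rule det_transpose[symmetric])
  also have "(select_rows A (xs[j := k]))\<^sup>T = replace_col B\<^sup>T r j"
    using A B xs j unfolding replace_col_def B_def r_def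
    by (intro eq_matI) (auto simp: nth_list_update row_def)
  also have "det \<dots> = y $ j * det B\<^sup>T"
    using cramer_lemma_mat[of "B\<^sup>T" n y j] B y j unfolding Bty by simp
  also have "y $ j = (A * Bi) $$ (k, j)"
    by (rule ABy[symmetric])
  also have "det B\<^sup>T = det B"
    by (rule det_transpose[OF B])
  finally show ?thesis unfolding B_def .
qed

lemma select_rows_eq_mult:
  fixes A :: "'a::semiring_1 mat"
  assumes A: "A \<in> carrier_mat m n" and xs: "set xs \<subseteq> {..<m}"
  shows "select_rows A xs = mat (length xs) m (\<lambda>(i, k). if k = xs ! i then 1 else 0) * A"
proof (rule eq_matI)
  fix i j assume i: "i < dim_row (mat (length xs) m (\<lambda>(i, k). if k = xs ! i then 1 else 0) * A)"
    and j: "j < dim_col (mat (length xs) m (\<lambda>(i, k). if k = xs ! i then 1 else 0) * A)"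
  then have "xs ! i < m" using xs A by (auto dest: nth_mem)
  have "(mat (length xs) m (\<lambda>(i, k). if k = xs ! i then 1 else 0) * A) $$ (i, j)
      = (\<Sum>k = 0..<m. (if k = xs ! i then 1 else 0) * A $$ (k, j))"
    using i j A by (simp add: scalar_prod_def)
  also have "\<dots> = (\<Sum>k = 0..<m. if k = xs ! i then A $$ (k, j) else 0)"
    by (rule sum.cong) auto
  also have "\<dots> = select_rows A xs $$ (i, j)"
    using i j A \<open>xs ! i < m\<close> by simp
  finally show "select_rows A xs $$ (i, j) = (mat (length xs) m (\<lambda>(i, k). if k = xs ! i then 1 else 0) * A) $$ (i, j)"
    by simp
qed (use A in auto)

section \<open>Degree and properness of rational functions\<close>

text \<open>Degree of the numerator minus degree of the denominator; its value at \<open>0\<close> is unspecified.\<close>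

definition ratf_degree :: "'a::field ratf \<Rightarrow> int" where
  "ratf_degree f = (SOME d. \<exists>p q. p \<noteq> 0 \<and> q \<noteq> 0 \<and> f = Fract p q \<and> d = int (degree p) - int (degree q))"

lemma ratf_degree_Fract:
  fixes p q :: "'a::field poly"
  assumes "p \<noteq> 0" "q \<noteq> 0"
  shows "ratf_degree (Fract p q) = int (degree p) - int (degree q)"
  unfolding ratf_degree_def
proof (rule some_equality)
  fix d assume "\<exists>p' q'. p' \<noteq> 0 \<and> q' \<noteq> 0 \<and> Fract p q = Fract p' q' \<and> d = int (degree p') - int (degree q')"
  then obtain p' q' where pq': "p' \<noteq> 0" "q' \<noteq> 0" "Fract p q = Fract p' q'"
    and d: "d = int (degree p') - int (degree q')"
    by blast
  from pq' assms have "p * q' = p' * q" by (simp add: eq_fract)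
  then have "degree p + degree q' = degree p' + degree q"
    using assms pq' by (metis degree_mult_eq)
  then show "d = int (degree p) - int (degree q)" using d by simp
qed (use assms in blast)

lemma ratf_degree_cases:
  assumes "f \<noteq> 0"
  obtains p q where "p \<noteq> 0" "q \<noteq> 0" "f = Fract p q"
    "ratf_degree f = int (degree p) - int (degree q)"
proof -
  obtain p q where "f = Fract p q" "q \<noteq> 0" "p \<noteq> 0"
    using assms by (cases f rule: Fract_cases_nonzero) auto
  then show ?thesis using that ratf_degree_Fract by blast
qed

lemma ratf_degree_mult:
  assumes "f \<noteq> 0" "g \<noteq> 0"
  shows "ratf_degree (f * g) = ratf_degree f + ratf_degree g"
proof -
  obtain p q where pq: "p \<noteq> 0" "q \<noteq> 0" "f = Fract p q"
    "ratf_degree f = int (degree p) - int (degree q)"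
    using ratf_degree_cases[OF assms(1)] by blast
  obtain p' q' where pq': "p' \<noteq> 0" "q' \<noteq> 0" "g = Fract p' q'"
    "ratf_degree g = int (degree p') - int (degree q')"
    using ratf_degree_cases[OF assms(2)] by blast
  have "f * g = Fract (p * p') (q * q')" using pq pq' by simp
  then show ?thesis using pq pq' by (simp add: ratf_degree_Fract degree_mult_eq)
qed

lemma ratf_degree_inverse:
  assumes "f \<noteq> 0"
  shows "ratf_degree (inverse f) = - ratf_degree f"
proof -
  obtain p q where pq: "p \<noteq> 0" "q \<noteq> 0" "f = Fract p q"
    "ratf_degree f = int (degree p) - int (degree q)"
    using ratf_degree_cases[OF assms] by blast
  then show ?thesis by (simp add: ratf_degree_Fract)
qed

lemma proper_Fract: "q \<noteq> 0 \<Longrightarrow> degree p \<le> degree q \<Longrightarrow> proper (Fract p q)"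
  unfolding proper_def by blast

lemma properE:
  assumes "proper f"
  obtains p q where "q \<noteq> 0" "degree p \<le> degree q" "f = Fract p q"
  using assms that[of 1 0] unfolding proper_def by (auto simp: fract_collapse)

lemma proper_iff_ratf_degree: "proper f \<longleftrightarrow> f = 0 \<or> ratf_degree f \<le> 0"
proof
  assume "proper f"
  then obtain p q where "q \<noteq> 0" "degree p \<le> degree q" "f = Fract p q"
    by (rule properE)
  then show "f = 0 \<or> ratf_degree f \<le> 0"
    by (cases "p = 0") (auto simp: ratf_degree_Fract fract_collapse)
next
  assume "f = 0 \<or> ratf_degree f \<le> 0"
  then show "proper f"
    by (metis proper_def ratf_degree_cases diff_le_0_iff_le of_nat_le_iff)
qed

lemma proper_0 [simp]: "proper 0"
  unfolding proper_def by simp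

lemma proper_1 [simp]: "proper 1"
  using proper_Fract[of 1 1] by (simp add: fract_collapse)

lemma proper_add:
  assumes "proper f" "proper g"
  shows "proper (f + g)"
proof -
  obtain a b where ab: "b \<noteq> 0" "degree a \<le> degree b" "f = Fract a b"
    using assms(1) by (rule properE)
  obtain c d where cd: "d \<noteq> 0" "degree c \<le> degree d" "g = Fract c d"
    using assms(2) by (rule properE)
  have "degree (a * d + c * b) \<le> degree (b * d)"
    using ab cd degree_mult_le[of a d] degree_mult_le[of c b]
    by (intro degree_add_le) (simp_all add: degree_mult_eq)
  then show ?thesis using ab cd by (simp add: proper_Fract)
qed

lemma proper_mult:
  assumes "proper f" "proper g"
  shows "proper (f * g)"
proof -
  obtain a b where ab: "b \<noteq> 0" "degree a \<le> degree b" "f = Fract a b"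
    using assms(1) by (rule properE)
  obtain c d where cd: "d \<noteq> 0" "degree c \<le> degree d" "g = Fract c d"
    using assms(2) by (rule properE)
  have "degree (a * c) \<le> degree (b * d)"
    using ab cd degree_mult_le[of a c] by (simp add: degree_mult_eq)
  then show ?thesis using ab cd by (simp add: proper_Fract)
qed

lemma proper_uminus: "proper f \<Longrightarrow> proper (- f)"
  by (metis properE minus_fract degree_minus proper_Fract)

lemma proper_diff: "proper f \<Longrightarrow> proper g \<Longrightarrow> proper (f - g)"
  using proper_add[of f "- g"] proper_uminus[of g] by simp

lemma proper_sum: "(\<And>i. i \<in> A \<Longrightarrow> proper (f i)) \<Longrightarrow> proper (sum f A)"
  by (induction A rule: infinite_finite_induct) (auto intro: proper_add)

lemma proper_mult_inverse:
  assumes "a \<noteq> 0" "b \<noteq> 0" "ratf_degree a \<le> ratf_degree b"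
  shows "proper (a * inverse b)"
  using assms by (simp add: proper_iff_ratf_degree ratf_degree_mult ratf_degree_inverse)

lemma s_ratf_nonzero [simp]: "s_ratf \<noteq> 0"
  unfolding s_ratf_def by simp

lemma not_proper_s_ratf_mult:
  fixes p :: "'a::field poly"
  assumes "p \<noteq> 0"
  shows "\<not> proper (s_ratf * to_fract p)"
proof -
  have "s_ratf * to_fract p = Fract ([:0, 1:] * p) 1"
    unfolding s_ratf_def to_fract_def by simp
  moreover have "degree ([:0, 1:] * p) = degree p + 1"
    using assms by (subst degree_mult_eq) auto
  ultimately have "ratf_degree (s_ratf * to_fract p) = int (degree p) + 1"
    using assms by (simp add: ratf_degree_Fract)
  then show ?thesis using assms by (simp add: proper_iff_ratf_degree)
qed

section \<open>The polynomial part\<close>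

lemma polynomial_part_exists:
  "\<exists>g h. proper h \<and> (f :: 'a::field ratf) = to_fract g + inverse s_ratf * h"
proof -
  obtain p q where pq: "f = Fract p q" "q \<noteq> 0" by (cases f) auto
  define r where "r = p mod q"
  define h where "h = Fract ([:0, 1:] * r) q"
  have "inverse s_ratf * h = Fract r q"
    using pq unfolding h_def s_ratf_def to_fract_def by (simp add: eq_fract)
  moreover have "f = to_fract (p div q) + Fract r q"
    using pq unfolding r_def to_fract_def by (simp add: eq_fract algebra_simps)
  moreover have "proper h"
  proof (cases "r = 0")
    case False
    then have "degree r < degree q" using pq degree_mod_less unfolding r_def by blast
    moreover have "degree ([:0, 1:] * r) = degree r + 1" using False by (subst degree_mult_eq) auto
    ultimately show ?thesis using pq unfolding h_def by (intro proper_Fract) auto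
  qed (simp add: h_def fract_collapse)
  ultimately show ?thesis by metis
qed

lemma polynomial_part_unique:
  assumes "proper h" "proper h'"
    and "to_fract g + inverse s_ratf * h = to_fract g' + inverse s_ratf * h'"
  shows "g = g'"
proof (rule ccontr)
  assume "g \<noteq> g'"
  have "s_ratf * to_fract (g - g') = h' - h"
    using assms(3) by (simp add: field_simps)
  then show False
    using not_proper_s_ratf_mult[of "g - g'"] \<open>g \<noteq> g'\<close> proper_diff[OF assms(2,1)] by simp
qed

lemma pi_plus_eq:
  assumes "proper h"
  shows "pi_plus (to_fract g + inverse s_ratf * h) = to_fract g"
proof -
  have "(THE g'. \<exists>h'. proper h' \<and> to_fract g + inverse s_ratf * h = to_fract g' + inverse s_ratf * h') = g"
    using assms by (blast dest: polynomial_part_unique)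
  then show ?thesis unfolding pi_plus_def by simp
qed

lemma pi_plus_eq_iff: "pi_plus f = pi_plus f' \<longleftrightarrow> proper (s_ratf * (f - f'))"
proof -
  obtain g h where h: "proper h" and f: "f = to_fract g + inverse s_ratf * h"
    using polynomial_part_exists by blast
  obtain g' h' where h': "proper h'" and f': "f' = to_fract g' + inverse s_ratf * h'"
    using polynomial_part_exists by blast
  have diff: "s_ratf * (f - f') = s_ratf * to_fract (g - g') + (h - h')"
    unfolding f f' by (simp add: field_simps)
  have "pi_plus f = pi_plus f' \<longleftrightarrow> g = g'"
    unfolding f f' pi_plus_eq[OF h] pi_plus_eq[OF h'] by simp
  moreover have "\<not> proper (s_ratf * (f - f'))" if "g \<noteq> g'"
  proof
    assume "proper (s_ratf * (f - f'))"
    then have "proper (s_ratf * (f - f') - (h - h'))"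
      using proper_diff[OF h h'] by (rule proper_diff)
    then show False
      using not_proper_s_ratf_mult[of "g - g'"] \<open>g \<noteq> g'\<close> diff by simp
  qed
  ultimately show ?thesis using diff proper_diff[OF h h'] by auto
qed

section \<open>Proper vectors and matrices\<close>

lemma proper_vec_add:
  "proper_vec x \<Longrightarrow> proper_vec y \<Longrightarrow> dim_vec y = dim_vec x \<Longrightarrow> proper_vec (x + y)"
  unfolding proper_vec_def by (auto intro: proper_add)

lemma proper_vec_diff:
  "proper_vec x \<Longrightarrow> proper_vec y \<Longrightarrow> dim_vec y = dim_vec x \<Longrightarrow> proper_vec (x - y)"
  unfolding proper_vec_def by (auto intro: proper_diff)

lemma proper_unit_vec: "proper_vec (unit_vec n j)"
  unfolding proper_vec_def unit_vec_def by auto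

lemma proper_vec_append_iff:
  "proper_vec (v @\<^sub>v w) \<longleftrightarrow> proper_vec v \<and> proper_vec w"
  unfolding proper_vec_def
proof (intro iffI conjI allI impI)
  assume vw: "\<forall>i < dim_vec (v @\<^sub>v w). proper ((v @\<^sub>v w) $ i)"
  show "proper (v $ i)" if "i < dim_vec v" for i
    using vw[rule_format, of i] that by simp
  show "proper (w $ i)" if "i < dim_vec w" for i
    using vw[rule_format, of "dim_vec v + i"] that by simp
qed auto

lemma proper_scalar_prod:
  "proper_vec v \<Longrightarrow> proper_vec w \<Longrightarrow> dim_vec v = dim_vec w \<Longrightarrow> proper (v \<bullet> w)"
  unfolding scalar_prod_def proper_vec_def by (intro proper_sum proper_mult) auto

lemma proper_mat_row: "proper_mat A \<Longrightarrow> i < dim_row A \<Longrightarrow> proper_vec (row A i)"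
  unfolding proper_mat_def proper_vec_def by auto

lemma proper_mat_col: "proper_mat A \<Longrightarrow> j < dim_col A \<Longrightarrow> proper_vec (col A j)"
  unfolding proper_mat_def proper_vec_def by auto

lemma proper_mult_mat_vec:
  "proper_mat A \<Longrightarrow> proper_vec v \<Longrightarrow> dim_vec v = dim_col A \<Longrightarrow> proper_vec (A *\<^sub>v v)"
  unfolding proper_vec_def[of "A *\<^sub>v v"] by (simp add: proper_scalar_prod proper_mat_row)

lemma proper_mult_mat:
  "proper_mat A \<Longrightarrow> proper_mat B \<Longrightarrow> dim_col A = dim_row B \<Longrightarrow> proper_mat (A * B)"
  unfolding proper_mat_def[of "A * B"] by (simp add: proper_scalar_prod proper_mat_row proper_mat_col)

lemma proper_mat_of_cols:
  assumes "set vs \<subseteq> carrier_vec n" and "\<And>v. v \<in> set vs \<Longrightarrow> proper_vec v"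
  shows "proper_mat (mat_of_cols n vs)"
  unfolding proper_mat_def
proof (intro allI impI)
  fix i j assume i: "i < dim_row (mat_of_cols n vs)" and j: "j < dim_col (mat_of_cols n vs)"
  then have "vs ! j \<in> set vs" by simp
  then have "vs ! j \<in> carrier_vec n" "proper_vec (vs ! j)" using assms by auto
  then show "proper (mat_of_cols n vs $$ (i, j))"
    using i j unfolding proper_vec_def by (simp add: mat_of_cols_index)
qed

section \<open>Proper left inverses\<close>

lemma proper_mult_inverse_maximal_minor:
  fixes A :: "'a::field ratf mat"
  assumes A: "A \<in> carrier_mat m n" and xs: "length xs = n" "set xs \<subseteq> {..<m}"
    and Bi: "Bi \<in> carrier_mat n n" "Bi * select_rows A xs = 1\<^sub>m n"
    and maximal: "\<And>ys. length ys = n \<Longrightarrow> set ys \<subseteq> {..<m} \<Longrightarrow> det (select_rows A ys) \<noteq> 0 \<Longrightarrow>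
      ratf_degree (det (select_rows A ys)) \<le> ratf_degree (det (select_rows A xs))"
  shows "proper_mat (A * Bi)"
  unfolding proper_mat_def
proof (intro allI impI)
  fix k j assume "k < dim_row (A * Bi)" "j < dim_col (A * Bi)"
  then have k: "k < m" and j: "j < n" using A Bi by auto
  let ?B = "select_rows A xs" and ?ys = "xs[j := k]"
  have "?B \<in> carrier_mat n n"
    using A xs by (intro carrier_matI) auto
  then have "det Bi * det ?B = 1"
    using Bi det_mult[of Bi n ?B] by simp
  then have dB: "det ?B \<noteq> 0" by auto
  have dy: "det (select_rows A ?ys) = (A * Bi) $$ (k, j) * det ?B"
    using det_select_rows_update[OF A xs(1) Bi k j] .
  show "proper ((A * Bi) $$ (k, j))"
  proof (cases "det (select_rows A ?ys) = 0")
    case True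
    then show ?thesis using dy dB by simp
  next
    case False
    have "set ?ys \<subseteq> {..<m}"
      using xs k set_update_subset_insert[of xs j k] by auto
    then have "ratf_degree (det (select_rows A ?ys)) \<le> ratf_degree (det ?B)"
      using maximal False xs by simp
    then have "proper (det (select_rows A ?ys) * inverse (det ?B))"
      using False dB by (rule proper_mult_inverse[rotated 2])
    moreover have "(A * Bi) $$ (k, j) = det (select_rows A ?ys) * inverse (det ?B)"
      using dy dB by (simp add: field_simps)
    ultimately show ?thesis by simp
  qed
qed

lemma proper_mat_if_proper_mult:
  fixes A B :: "'a::field ratf mat"
  assumes A: "A \<in> carrier_mat m n" and B: "B \<in> carrier_mat n k" and AB: "proper_mat (A * B)"
    and reflects: "\<And>v. v \<in> carrier_vec n \<Longrightarrow> proper_vec (A *\<^sub>v v) \<Longrightarrow> proper_vec v"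
  shows "proper_mat B"
  unfolding proper_mat_def
proof (intro allI impI)
  fix i j assume i: "i < dim_row B" and j: "j < dim_col B"
  have "proper_vec (col (A * B) j)"
    using AB j by (intro proper_mat_col) simp_all
  moreover have "col (A * B) j = A *\<^sub>v col B j"
    using A B j by (intro col_mult2) auto
  ultimately have "proper_vec (A *\<^sub>v col B j)" by (simp only:)
  moreover have "col B j \<in> carrier_vec n"
    using B by (simp add: carrier_vecI)
  ultimately have "proper_vec (col B j)"
    by (rule reflects[rotated])
  then show "proper (B $$ (i, j))" using i j unfolding proper_vec_def by simp
qed

lemma proper_left_inverse_exists:
  fixes A :: "'a::field ratf mat"
  assumes A: "A \<in> carrier_mat m n"
    and reflects: "\<And>v. v \<in> carrier_vec n \<Longrightarrow> proper_vec (A *\<^sub>v v) \<Longrightarrow> proper_vec v"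
    and minor: "length xs0 = n" "set xs0 \<subseteq> {..<m}" "det (select_rows A xs0) \<noteq> 0"
  obtains N where "N \<in> carrier_mat n m" "proper_mat N" "N * A = 1\<^sub>m n"
proof -
  define X where "X = {xs. length xs = n \<and> set xs \<subseteq> {..<m} \<and> det (select_rows A xs) \<noteq> 0}"
  define F where "F xs = ratf_degree (det (select_rows A xs))" for xs
  have "finite X"
    by (rule finite_subset[OF _ finite_lists_length_eq[of "{..<m}" n]]) (auto simp: X_def)
  moreover have "xs0 \<in> X" using minor unfolding X_def by simp
  ultimately obtain xs where "xs \<in> X" and xs_max: "\<And>ys. ys \<in> X \<Longrightarrow> F ys \<le> F xs"
    using ex_is_arg_min_if_finite[of X "\<lambda>xs. - F xs"] unfolding is_arg_min_def
    by (metis empty_iff neg_le_iff_le not_le)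
  then have xs: "length xs = n" "set xs \<subseteq> {..<m}" and B: "select_rows A xs \<in> carrier_mat n n"
    "det (select_rows A xs) \<noteq> 0"
    using A unfolding X_def by auto
  obtain Bi where Bi: "Bi \<in> carrier_mat n n" "select_rows A xs * Bi = 1\<^sub>m n" "Bi * select_rows A xs = 1\<^sub>m n"
    using nonsingular_mat_inverse[OF B] .
  have "proper_mat (A * Bi)"
  proof (rule proper_mult_inverse_maximal_minor[OF A xs Bi(1,3)])
    fix ys assume "length ys = n" "set ys \<subseteq> {..<m}" "det (select_rows A ys) \<noteq> 0"
    then show "ratf_degree (det (select_rows A ys)) \<le> ratf_degree (det (select_rows A xs))"
      using xs_max[of ys] unfolding X_def F_def by simp
  qed
  have Bi_proper: "proper_mat Bi"
    using A Bi(1) \<open>proper_mat (A * Bi)\<close> reflects by (rule proper_mat_if_proper_mult)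
  define S :: "'a ratf mat" where "S = mat n m (\<lambda>(i, k). if k = xs ! i then 1 else 0)"
  have S: "S \<in> carrier_mat n m" "proper_mat S"
    unfolding S_def proper_mat_def by simp_all
  have "(Bi * S) * A = Bi * (S * A)"
    by (rule assoc_mult_mat[OF Bi(1) S(1) A])
  also have "S * A = select_rows A xs"
    using select_rows_eq_mult[OF A xs(2)] unfolding S_def xs(1) by simp
  finally have "(Bi * S) * A = 1\<^sub>m n" using Bi(3) by simp
  moreover have "proper_mat (Bi * S)"
    using Bi(1) S Bi_proper by (intro proper_mult_mat) auto
  ultimately show ?thesis
    using that Bi(1) S(1) by (meson mult_carrier_mat)
qed

lemma proper_left_inverse_append_rows_iff:
  fixes A B :: "'a::field ratf mat"
  assumes A: "A \<in> carrier_mat m n" and B: "B \<in> carrier_mat n n" "det B \<noteq> 0"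
  shows "(\<forall>v \<in> carrier_vec n. proper_vec (A *\<^sub>v v) \<longrightarrow> proper_vec (B *\<^sub>v v) \<longrightarrow> proper_vec v) \<longleftrightarrow>
    (\<exists>C D. C \<in> carrier_mat n m \<and> proper_mat C \<and> D \<in> carrier_mat n n \<and> proper_mat D \<and>
      C * A + D * B = 1\<^sub>m n)"
proof
  assume reflects: "\<forall>v \<in> carrier_vec n. proper_vec (A *\<^sub>v v) \<longrightarrow> proper_vec (B *\<^sub>v v) \<longrightarrow> proper_vec v"
  have AB: "A @\<^sub>r B \<in> carrier_mat (m + n) n" using A B by auto
  have "select_rows (A @\<^sub>r B) [m..<m + n] = B"
    using A B by (intro eq_matI) (auto simp: append_rows_def)
  then have minor: "det (select_rows (A @\<^sub>r B) [m..<m + n]) \<noteq> 0"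
    using B(2) by simp
  have AB_reflects: "proper_vec v" if "v \<in> carrier_vec n" "proper_vec ((A @\<^sub>r B) *\<^sub>v v)" for v
    using that reflects A B by (simp add: mat_mult_append proper_vec_append_iff)
  obtain N where N: "N \<in> carrier_mat n (m + n)" "proper_mat N" "N * (A @\<^sub>r B) = 1\<^sub>m n"
    by (rule proper_left_inverse_exists[OF AB AB_reflects _ _ minor]) auto
  show "\<exists>C D. C \<in> carrier_mat n m \<and> proper_mat C \<and> D \<in> carrier_mat n n \<and> proper_mat D \<and>
      C * A + D * B = 1\<^sub>m n"
    using N mult_append_rows_split[OF N(1) A B(1)] by (intro exI conjI) (auto simp: proper_mat_def)
next
  assume "\<exists>C D. C \<in> carrier_mat n m \<and> proper_mat C \<and> D \<in> carrier_mat n n \<and> proper_mat D \<and>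
      C * A + D * B = 1\<^sub>m n"
  then obtain C D where C: "C \<in> carrier_mat n m" "proper_mat C" and D: "D \<in> carrier_mat n n" "proper_mat D"
    and CD: "C * A + D * B = 1\<^sub>m n"
    by blast
  show "\<forall>v \<in> carrier_vec n. proper_vec (A *\<^sub>v v) \<longrightarrow> proper_vec (B *\<^sub>v v) \<longrightarrow> proper_vec v"
  proof (intro ballI impI)
    fix v assume v: "v \<in> carrier_vec n" and Av: "proper_vec (A *\<^sub>v v)" and Bv: "proper_vec (B *\<^sub>v v)"
    have "v = (C * A + D * B) *\<^sub>v v" using CD v by simp
    also have "\<dots> = C *\<^sub>v (A *\<^sub>v v) + D *\<^sub>v (B *\<^sub>v v)"
      using A B C D v by (simp add: add_mult_distrib_mat_vec[of _ n n])
    finally show "proper_vec v"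
      using A B C D Av Bv by (metis proper_vec_add proper_mult_mat_vec carrier_matD dim_mult_mat_vec)
  qed
qed

section \<open>The modules U^M\<close>

lemma ratm_carrier [simp]: "M \<in> carrier_mat m m' \<Longrightarrow> ratm M \<in> carrier_mat m m'"
  by (simp add: ratm_def)

lemma det_ratm: "det (ratm M) = to_fract (det M)"
proof -
  interpret to_fract: comm_ring_hom "to_fract :: 'a poly \<Rightarrow> 'a poly fract"
    by unfold_locales auto
  show ?thesis unfolding ratm_def by simp
qed

lemma rho_eq:
  assumes "M \<in> carrier_mat m m" "Mi \<in> carrier_mat m m"
    and "ratm M * Mi = 1\<^sub>m m" "Mi * ratm M = 1\<^sub>m m"
    and "x \<in> carrier_vec m"
  shows "rho M x = ratm M *\<^sub>v map_vec pi_plus (Mi *\<^sub>v x)"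
proof -
  have "(THE y. y \<in> carrier_vec (dim_col M) \<and> ratm M *\<^sub>v y = x) = Mi *\<^sub>v x"
  proof (rule the_equality)
    have "ratm M *\<^sub>v (Mi *\<^sub>v x) = (ratm M * Mi) *\<^sub>v x"
      using assms by (intro assoc_mult_mat_vec[symmetric, of _ m m _ m]) simp_all
    then show "Mi *\<^sub>v x \<in> carrier_vec (dim_col M) \<and> ratm M *\<^sub>v (Mi *\<^sub>v x) = x"
      using assms by simp
  next
    fix y assume y: "y \<in> carrier_vec (dim_col M) \<and> ratm M *\<^sub>v y = x"
    then have "y = (Mi * ratm M) *\<^sub>v y" using assms by simp
    also have "\<dots> = Mi *\<^sub>v (ratm M *\<^sub>v y)"
      using assms y by (intro assoc_mult_mat_vec[of _ m m _ m]) simp_all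
    finally show "y = Mi *\<^sub>v x" using y by simp
  qed
  then show ?thesis unfolding rho_def by simp
qed

lemma rho_eq_iff:
  assumes M: "M \<in> carrier_mat m m" "det M \<noteq> 0"
    and x: "x \<in> carrier_vec m" "x' \<in> carrier_vec m"
  shows "rho M x = rho M x' \<longleftrightarrow>
    (\<exists>z \<in> carrier_vec m. proper_vec z \<and> x - x' = (inverse s_ratf \<cdot>\<^sub>m ratm M) *\<^sub>v z)"
proof -
  let ?R = "ratm M"
  have R: "?R \<in> carrier_mat m m" "det ?R \<noteq> 0" using M by (simp_all add: det_ratm)
  obtain Mi where Mi: "Mi \<in> carrier_mat m m" "?R * Mi = 1\<^sub>m m" "Mi * ?R = 1\<^sub>m m"
    using nonsingular_mat_inverse[OF R] .
  have cancel: "Mi *\<^sub>v (?R *\<^sub>v v) = v" if "v \<in> carrier_vec m" for v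
    using Mi R that by (simp flip: assoc_mult_mat_vec[of _ m m _ m])
  have d: "Mi *\<^sub>v (x - x') = Mi *\<^sub>v x - Mi *\<^sub>v x'"
    using Mi x by (simp add: mult_minus_distrib_mat_vec)
  have "rho M x = rho M x' \<longleftrightarrow> map_vec pi_plus (Mi *\<^sub>v x) = map_vec pi_plus (Mi *\<^sub>v x')"
    unfolding rho_eq[OF M(1) Mi x(1)] rho_eq[OF M(1) Mi x(2)]
    using cancel Mi by (metis carrier_vecI dim_mult_mat_vec index_map_vec(2) carrier_matD(1))
  also have "\<dots> \<longleftrightarrow> proper_vec (s_ratf \<cdot>\<^sub>v (Mi *\<^sub>v (x - x')))"
    using Mi unfolding d vec_eq_iff proper_vec_def by (auto simp: pi_plus_eq_iff)
  also have "\<dots> \<longleftrightarrow> (\<exists>z \<in> carrier_vec m. proper_vec z \<and> x - x' = (inverse s_ratf \<cdot>\<^sub>m ?R) *\<^sub>v z)"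
  proof
    assume "proper_vec (s_ratf \<cdot>\<^sub>v (Mi *\<^sub>v (x - x')))"
    moreover have "(inverse s_ratf \<cdot>\<^sub>m ?R) *\<^sub>v (s_ratf \<cdot>\<^sub>v (Mi *\<^sub>v (x - x'))) = x - x'"
      using Mi R x by (simp add: smult_mat_mult_vec mult_mat_vec smult_smult_assoc flip: assoc_mult_mat_vec[of _ m m _ m])
    ultimately show "\<exists>z \<in> carrier_vec m. proper_vec z \<and> x - x' = (inverse s_ratf \<cdot>\<^sub>m ?R) *\<^sub>v z"
      using Mi x by (metis carrier_vecI dim_mult_mat_vec index_smult_vec(2) carrier_matD(1))
  next
    assume "\<exists>z \<in> carrier_vec m. proper_vec z \<and> x - x' = (inverse s_ratf \<cdot>\<^sub>m ?R) *\<^sub>v z"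
    then obtain z where z: "z \<in> carrier_vec m" "proper_vec z" "x - x' = (inverse s_ratf \<cdot>\<^sub>m ?R) *\<^sub>v z"
      by blast
    then have "s_ratf \<cdot>\<^sub>v (Mi *\<^sub>v (x - x')) = z"
      using R Mi by (simp add: smult_mat_mult_vec mult_mat_vec cancel smult_smult_assoc)
    then show "proper_vec (s_ratf \<cdot>\<^sub>v (Mi *\<^sub>v (x - x')))" using z by simp
  qed
  finally show ?thesis .
qed

lemma U_mod_eq: "M \<in> carrier_mat m m \<Longrightarrow> U_mod M = rho M ` {x \<in> carrier_vec m. proper_vec x}"
  unfolding U_mod_def by simp

lemma rho_mult_image_subset_U_mod:
  assumes "M \<in> carrier_mat m m" "\<Theta> \<in> carrier_mat m n" "proper_mat \<Theta>"
  shows "(\<lambda>x. rho M (\<Theta> *\<^sub>v x)) ` {x \<in> carrier_vec n. proper_vec x} \<subseteq> U_mod M"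
  using assms unfolding U_mod_eq[OF assms(1)] by (auto intro!: proper_mult_mat_vec)

lemma proper_bezout_if_U_mod_subset_rho_mult_image:
  assumes M: "M \<in> carrier_mat m m" "det M \<noteq> 0" and \<Theta>: "\<Theta> \<in> carrier_mat m n"
    and subset: "U_mod M \<subseteq> (\<lambda>x. rho M (\<Theta> *\<^sub>v x)) ` {x \<in> carrier_vec n. proper_vec x}"
  shows "\<exists>C D. C \<in> carrier_mat n m \<and> proper_mat C \<and> D \<in> carrier_mat m m \<and> proper_mat D \<and>
    \<Theta> * C + inverse s_ratf \<cdot>\<^sub>m (ratm M * D) = 1\<^sub>m m"
proof -
  let ?P = "inverse s_ratf \<cdot>\<^sub>m ratm M"
  have "\<exists>x z. x \<in> carrier_vec n \<and> proper_vec x \<and> z \<in> carrier_vec m \<and> proper_vec z \<and>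
      unit_vec m j - \<Theta> *\<^sub>v x = ?P *\<^sub>v z" for j
  proof -
    have "rho M (unit_vec m j) \<in> U_mod M"
      using proper_unit_vec[of m j] unfolding U_mod_eq[OF M(1)] by auto
    then obtain x where "x \<in> carrier_vec n" "proper_vec x" "rho M (unit_vec m j) = rho M (\<Theta> *\<^sub>v x)"
      using subset by blast
    then show ?thesis using rho_eq_iff[OF M, of "unit_vec m j" "\<Theta> *\<^sub>v x"] \<Theta> by auto
  qed
  then obtain X Z where X: "\<And>j. X j \<in> carrier_vec n \<and> proper_vec (X j)"
    and Z: "\<And>j. Z j \<in> carrier_vec m \<and> proper_vec (Z j)"
    and XZ: "\<And>j. unit_vec m j - \<Theta> *\<^sub>v X j = ?P *\<^sub>v Z j"
    by metis
  define C where "C = mat_of_cols n (map X [0..<m])"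
  define D where "D = mat_of_cols m (map Z [0..<m])"
  have C: "C \<in> carrier_mat n m" "proper_mat C"
    unfolding C_def using X by (auto intro!: proper_mat_of_cols)
  have D: "D \<in> carrier_mat m m" "proper_mat D"
    unfolding D_def using Z by (auto intro!: proper_mat_of_cols)
  have P: "?P \<in> carrier_mat m m" using M(1) by simp
  have "\<Theta> *\<^sub>v X j + ?P *\<^sub>v Z j = unit_vec m j" for j
    using XZ[of j] \<Theta> X[of j] by (intro eq_vecI) (auto simp flip: XZ)
  then have "\<Theta> * C + ?P * D = 1\<^sub>m m"
    unfolding C_def D_def using \<Theta> P X Z by (intro mat_of_cols_solves_one_mat) auto
  moreover have "?P * D = inverse s_ratf \<cdot>\<^sub>m (ratm M * D)"
    using ratm_carrier[OF M(1)] D(1) by (rule mult_smult_assoc_mat)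
  ultimately show ?thesis using C D by auto
qed

lemma U_mod_subset_rho_mult_image_if_proper_bezout:
  assumes M: "M \<in> carrier_mat m m" "det M \<noteq> 0" and \<Theta>: "\<Theta> \<in> carrier_mat m n"
    and C: "C \<in> carrier_mat n m" "proper_mat C" and D: "D \<in> carrier_mat m m" "proper_mat D"
    and CD: "\<Theta> * C + inverse s_ratf \<cdot>\<^sub>m (ratm M * D) = 1\<^sub>m m"
  shows "U_mod M \<subseteq> (\<lambda>x. rho M (\<Theta> *\<^sub>v x)) ` {x \<in> carrier_vec n. proper_vec x}"
proof
  let ?P = "inverse s_ratf \<cdot>\<^sub>m ratm M"
  have P: "?P \<in> carrier_mat m m" using M by simp
  fix u assume "u \<in> U_mod M"
  then obtain w where w: "w \<in> carrier_vec m" "proper_vec w" and u: "u = rho M w"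
    unfolding U_mod_eq[OF M(1)] by blast
  let ?x = "C *\<^sub>v w" and ?z = "D *\<^sub>v w"
  have x: "?x \<in> carrier_vec n" "proper_vec ?x" and z: "?z \<in> carrier_vec m" "proper_vec ?z"
    using C D w by (auto intro: proper_mult_mat_vec)
  have "inverse s_ratf \<cdot>\<^sub>m (ratm M * D) = ?P * D"
    using ratm_carrier[OF M(1)] D(1) by (rule mult_smult_assoc_mat[symmetric])
  then have "w = (\<Theta> * C + ?P * D) *\<^sub>v w" using CD w by simp
  also have "\<dots> = (\<Theta> * C) *\<^sub>v w + (?P * D) *\<^sub>v w"
    using \<Theta> C(1) D(1) P w by (intro add_mult_distrib_mat_vec) auto
  also have "\<dots> = \<Theta> *\<^sub>v ?x + ?P *\<^sub>v ?z"
    using \<Theta> C(1) D(1) P w by simp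
  finally have "w - \<Theta> *\<^sub>v ?x = (\<Theta> *\<^sub>v ?x + ?P *\<^sub>v ?z) - \<Theta> *\<^sub>v ?x" by simp
  also have "\<dots> = ?P *\<^sub>v ?z"
    using \<Theta> P z by (intro eq_vecI) auto
  finally have "rho M w = rho M (\<Theta> *\<^sub>v ?x)"
    using rho_eq_iff[OF M w(1), of "\<Theta> *\<^sub>v ?x"] \<Theta> x z by auto
  then show "u \<in> (\<lambda>x. rho M (\<Theta> *\<^sub>v x)) ` {x \<in> carrier_vec n. proper_vec x}"
    using u x by blast
qed

lemma rho_mult_image_eq_U_mod_iff:
  assumes M: "M \<in> carrier_mat m m" "det M \<noteq> 0"
    and \<Theta>: "\<Theta> \<in> carrier_mat m n" "proper_mat \<Theta>"
  shows "(\<lambda>x. rho M (\<Theta> *\<^sub>v x)) ` {x \<in> carrier_vec n. proper_vec x} = U_mod M \<longleftrightarrow>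
    (\<exists>C D. C \<in> carrier_mat n m \<and> proper_mat C \<and> D \<in> carrier_mat m m \<and> proper_mat D \<and>
      \<Theta> * C + inverse s_ratf \<cdot>\<^sub>m (ratm M * D) = 1\<^sub>m m)"
proof
  assume "(\<lambda>x. rho M (\<Theta> *\<^sub>v x)) ` {x \<in> carrier_vec n. proper_vec x} = U_mod M"
  then show "\<exists>C D. C \<in> carrier_mat n m \<and> proper_mat C \<and> D \<in> carrier_mat m m \<and> proper_mat D \<and>
      \<Theta> * C + inverse s_ratf \<cdot>\<^sub>m (ratm M * D) = 1\<^sub>m m"
    using proper_bezout_if_U_mod_subset_rho_mult_image[OF M \<Theta>(1)] by simp
next
  assume "\<exists>C D. C \<in> carrier_mat n m \<and> proper_mat C \<and> D \<in> carrier_mat m m \<and> proper_mat D \<and>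
      \<Theta> * C + inverse s_ratf \<cdot>\<^sub>m (ratm M * D) = 1\<^sub>m m"
  then have "U_mod M \<subseteq> (\<lambda>x. rho M (\<Theta> *\<^sub>v x)) ` {x \<in> carrier_vec n. proper_vec x}"
    using U_mod_subset_rho_mult_image_if_proper_bezout[OF M \<Theta>(1)] by blast
  then show "(\<lambda>x. rho M (\<Theta> *\<^sub>v x)) ` {x \<in> carrier_vec n. proper_vec x} = U_mod M"
    using rho_mult_image_subset_U_mod[OF M(1) \<Theta>] by (rule subset_antisym[rotated])
qed

section \<open>The homomorphism phi\<close>

locale proper_intertwining =
  fixes L L1 :: "'a::field poly mat" and \<Theta> \<Theta>1 :: "'a ratf mat" and n n1 :: nat
  assumes L: "L \<in> carrier_mat n n" "det L \<noteq> 0"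
    and L1: "L1 \<in> carrier_mat n1 n1" "det L1 \<noteq> 0"
    and \<Theta>: "\<Theta> \<in> carrier_mat n1 n" "proper_mat \<Theta>"
    and \<Theta>1: "\<Theta>1 \<in> carrier_mat n1 n" "proper_mat \<Theta>1"
    and intertwining: "\<Theta> * ratm L = ratm L1 * \<Theta>1"
begin

abbreviation P :: "'a ratf mat" where "P \<equiv> inverse s_ratf \<cdot>\<^sub>m ratm L"
abbreviation P1 :: "'a ratf mat" where "P1 \<equiv> inverse s_ratf \<cdot>\<^sub>m ratm L1"

lemma P_carrier: "P \<in> carrier_mat n n" and P1_carrier: "P1 \<in> carrier_mat n1 n1"
  using L L1 by simp_all

lemma det_P: "det P \<noteq> 0" and det_P1: "det P1 \<noteq> 0"
  using L L1 by (simp_all add: det_ratm)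

lemma intertwining_vec: "v \<in> carrier_vec n \<Longrightarrow> \<Theta> *\<^sub>v (P *\<^sub>v v) = P1 *\<^sub>v (\<Theta>1 *\<^sub>v v)"
proof -
  assume v: "v \<in> carrier_vec n"
  have "\<Theta> * P = inverse s_ratf \<cdot>\<^sub>m (\<Theta> * ratm L)"
    using \<Theta>(1) ratm_carrier[OF L(1)] by (rule mult_smult_distrib)
  also have "\<dots> = P1 * \<Theta>1"
    using ratm_carrier[OF L1(1)] \<Theta>1(1) unfolding intertwining by (rule mult_smult_assoc_mat[symmetric])
  finally have "\<Theta> * P = P1 * \<Theta>1" .
  then have "(\<Theta> * P) *\<^sub>v v = (P1 * \<Theta>1) *\<^sub>v v" by simp
  then show ?thesis
    using assoc_mult_mat_vec[OF \<Theta>(1) P_carrier v] assoc_mult_mat_vec[OF P1_carrier \<Theta>1(1) v] by simp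
qed

lemma rho_mult_cong:
  assumes x: "x \<in> carrier_vec n" "x' \<in> carrier_vec n" and eq: "rho L x = rho L x'"
  shows "rho L1 (\<Theta> *\<^sub>v x) = rho L1 (\<Theta> *\<^sub>v x')"
proof -
  obtain z where z: "z \<in> carrier_vec n" "proper_vec z" "x - x' = P *\<^sub>v z"
    using eq rho_eq_iff[OF L x] by blast
  have "\<Theta> *\<^sub>v x - \<Theta> *\<^sub>v x' = \<Theta> *\<^sub>v (x - x')"
    using \<Theta>(1) x by (simp add: mult_minus_distrib_mat_vec)
  also have "\<dots> = P1 *\<^sub>v (\<Theta>1 *\<^sub>v z)"
    using z by (simp add: intertwining_vec)
  moreover have "\<Theta>1 *\<^sub>v z \<in> carrier_vec n1" "proper_vec (\<Theta>1 *\<^sub>v z)"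
    using z \<Theta>1 by (auto intro: proper_mult_mat_vec)
  ultimately show ?thesis
    using rho_eq_iff[OF L1, of "\<Theta> *\<^sub>v x" "\<Theta> *\<^sub>v x'"] x \<Theta>(1) by auto
qed

lemma phi_hom_rho:
  assumes "x \<in> carrier_vec n" "proper_vec x"
  shows "phi_hom L L1 \<Theta> (rho L x) = rho L1 (\<Theta> *\<^sub>v x)"
proof -
  let ?Q = "\<lambda>x'. x' \<in> carrier_vec (dim_row L) \<and> proper_vec x' \<and> rho L x' = rho L x"
  have "?Q x" using L assms by simp
  then have "?Q (SOME x'. ?Q x')" by (rule someI)
  then have "rho L1 (\<Theta> *\<^sub>v (SOME x'. ?Q x')) = rho L1 (\<Theta> *\<^sub>v x)"
    using assms L(1) by (intro rho_mult_cong) auto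
  then show ?thesis unfolding phi_hom_def .
qed

lemma phi_hom_image:
  "phi_hom L L1 \<Theta> ` U_mod L = (\<lambda>x. rho L1 (\<Theta> *\<^sub>v x)) ` {x \<in> carrier_vec n. proper_vec x}"
  unfolding U_mod_eq[OF L(1)] image_image using phi_hom_rho by (intro image_cong) auto

lemma phi_hom_surj_iff:
  "phi_hom L L1 \<Theta> ` U_mod L = U_mod L1 \<longleftrightarrow>
    (\<exists>C D. C \<in> carrier_mat n n1 \<and> proper_mat C \<and> D \<in> carrier_mat n1 n1 \<and> proper_mat D \<and>
      \<Theta> * C + inverse s_ratf \<cdot>\<^sub>m (ratm L1 * D) = 1\<^sub>m n1)"
  unfolding phi_hom_image using rho_mult_image_eq_U_mod_iff[OF L1 \<Theta>] .

lemma proper_if_inj_on_phi_hom: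
  assumes inj: "inj_on (phi_hom L L1 \<Theta>) (U_mod L)"
    and v: "v \<in> carrier_vec n" and \<Theta>1v: "proper_vec (\<Theta>1 *\<^sub>v v)" and Pv: "proper_vec (P *\<^sub>v v)"
  shows "proper_vec v"
proof -
  let ?x = "P *\<^sub>v v"
  have x: "?x \<in> carrier_vec n" using P_carrier v by simp
  have zero: "0\<^sub>v n \<in> carrier_vec n" "proper_vec (0\<^sub>v n)" "\<Theta> *\<^sub>v 0\<^sub>v n = 0\<^sub>v n1"
    using \<Theta>(1) unfolding proper_vec_def by auto
  have "\<Theta> *\<^sub>v ?x - \<Theta> *\<^sub>v 0\<^sub>v n = P1 *\<^sub>v (\<Theta>1 *\<^sub>v v)"
    using intertwining_vec[OF v] P1_carrier \<Theta>1(1) v zero(3) by auto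
  moreover have "\<Theta>1 *\<^sub>v v \<in> carrier_vec n1" using \<Theta>1(1) v by simp
  moreover have "\<Theta> *\<^sub>v ?x \<in> carrier_vec n1" "\<Theta> *\<^sub>v 0\<^sub>v n \<in> carrier_vec n1"
    using \<Theta>(1) x zero(1) by simp_all
  ultimately have "rho L1 (\<Theta> *\<^sub>v ?x) = rho L1 (\<Theta> *\<^sub>v 0\<^sub>v n)"
    using rho_eq_iff[OF L1] \<Theta>1v by blast
  then have "phi_hom L L1 \<Theta> (rho L ?x) = phi_hom L L1 \<Theta> (rho L (0\<^sub>v n))"
    using phi_hom_rho[OF x Pv] phi_hom_rho[OF zero(1,2)] by simp
  moreover have "rho L ?x \<in> U_mod L" "rho L (0\<^sub>v n) \<in> U_mod L"
    unfolding U_mod_eq[OF L(1)] using x Pv zero by auto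
  ultimately have "rho L ?x = rho L (0\<^sub>v n)"
    using inj by (auto dest: inj_onD)
  then obtain y where y: "y \<in> carrier_vec n" "proper_vec y" "?x - 0\<^sub>v n = P *\<^sub>v y"
    using rho_eq_iff[OF L x zero(1)] by blast
  then have "P *\<^sub>v v = P *\<^sub>v y" using x by simp
  then have "v = y" using mult_mat_vec_cancel[OF P_carrier det_P v y(1)] by simp
  then show "proper_vec v" using y by simp
qed

lemma inj_on_phi_hom_if_reflects:
  assumes reflects: "\<And>v. v \<in> carrier_vec n \<Longrightarrow> proper_vec (\<Theta>1 *\<^sub>v v) \<Longrightarrow> proper_vec (P *\<^sub>v v) \<Longrightarrow> proper_vec v"
  shows "inj_on (phi_hom L L1 \<Theta>) (U_mod L)"
proof (rule inj_onI)
  fix u u' assume "u \<in> U_mod L" "u' \<in> U_mod L" and eq: "phi_hom L L1 \<Theta> u = phi_hom L L1 \<Theta> u'"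
  then obtain x x' where x: "x \<in> carrier_vec n" "proper_vec x" "u = rho L x"
    and x': "x' \<in> carrier_vec n" "proper_vec x'" "u' = rho L x'"
    unfolding U_mod_eq[OF L(1)] by blast
  have "rho L1 (\<Theta> *\<^sub>v x) = rho L1 (\<Theta> *\<^sub>v x')"
    using eq phi_hom_rho x x' by simp
  then obtain z where z: "z \<in> carrier_vec n1" "proper_vec z" "\<Theta> *\<^sub>v x - \<Theta> *\<^sub>v x' = P1 *\<^sub>v z"
    using rho_eq_iff[OF L1, of "\<Theta> *\<^sub>v x" "\<Theta> *\<^sub>v x'"] \<Theta>(1) x x' by auto
  obtain v where v: "v \<in> carrier_vec n" "P *\<^sub>v v = x - x'"
    using mult_mat_vec_surj[OF P_carrier det_P, of "x - x'"] x x' by auto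
  have "P1 *\<^sub>v (\<Theta>1 *\<^sub>v v) = \<Theta> *\<^sub>v (x - x')"
    using intertwining_vec[OF v(1)] v(2) by simp
  also have "\<dots> = P1 *\<^sub>v z"
    using z(3) \<Theta>(1) x x' by (simp add: mult_minus_distrib_mat_vec)
  finally have "\<Theta>1 *\<^sub>v v = z"
    using mult_mat_vec_cancel[OF P1_carrier det_P1] \<Theta>1(1) v z by simp
  moreover have "proper_vec (P *\<^sub>v v)"
    using v x x' by (simp add: proper_vec_diff)
  ultimately have "proper_vec v" using reflects v z by simp
  then show "u = u'"
    using rho_eq_iff[OF L x(1) x'(1)] v x x' by auto
qed

lemma phi_hom_inj_on_iff:
  "inj_on (phi_hom L L1 \<Theta>) (U_mod L) \<longleftrightarrow>
    (\<exists>C D. C \<in> carrier_mat n n1 \<and> proper_mat C \<and> D \<in> carrier_mat n n \<and> proper_mat D \<and>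
      C * \<Theta>1 + D * (inverse s_ratf \<cdot>\<^sub>m ratm L) = 1\<^sub>m n)"
proof -
  have "inj_on (phi_hom L L1 \<Theta>) (U_mod L) \<longleftrightarrow>
      (\<forall>v \<in> carrier_vec n. proper_vec (\<Theta>1 *\<^sub>v v) \<longrightarrow> proper_vec (P *\<^sub>v v) \<longrightarrow> proper_vec v)"
    using proper_if_inj_on_phi_hom inj_on_phi_hom_if_reflects by blast
  then show ?thesis
    using proper_left_inverse_append_rows_iff[OF \<Theta>1(1) P_carrier det_P] by simp
qed

end

theorem theorem3p5:
  fixes L :: "'a::field poly mat" and L1 :: "'a poly mat"
    and \<Theta> \<Theta>1 :: "'a ratf mat"
  assumes L: "L \<in> carrier_mat n n" and L_ns: "det L \<noteq> 0"
    and L1: "L1 \<in> carrier_mat n1 n1" and L1_ns: "det L1 \<noteq> 0"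
    and Th: "\<Theta> \<in> carrier_mat n1 n" and Th_p: "proper_mat \<Theta>"
    and Th1: "\<Theta>1 \<in> carrier_mat n1 n" and Th1_p: "proper_mat \<Theta>1"
    and inter: "\<Theta> * ratm L = ratm L1 * \<Theta>1"
  shows "(phi_hom L L1 \<Theta> ` U_mod L = U_mod L1 \<longleftrightarrow>
           (\<exists>C D. C \<in> carrier_mat n n1 \<and> proper_mat C \<and>
                  D \<in> carrier_mat n1 n1 \<and> proper_mat D \<and>
                  \<Theta> * C + inverse s_ratf \<cdot>\<^sub>m (ratm L1 * D) = 1\<^sub>m n1))
       \<and> (inj_on (phi_hom L L1 \<Theta>) (U_mod L) \<longleftrightarrow>
           (\<exists>C D. C \<in> carrier_mat n n1 \<and> proper_mat C \<and>
                  D \<in> carrier_mat n n \<and> proper_mat D \<and>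
                  C * \<Theta>1 + D * (inverse s_ratf \<cdot>\<^sub>m ratm L) = 1\<^sub>m n))"
proof -
  interpret proper_intertwining L L1 \<Theta> \<Theta>1 n n1
    using assms by unfold_locales
  show ?thesis using phi_hom_surj_iff phi_hom_inj_on_iff by blast
qed

end
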